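(* Let $Q$ be a good dyadic square or a dyadic segment. Then each of the circular arcs bounding $\widehat{\langle Q\rangle}=\Sigma^{-1}(\langle Q\rangle)\subset S^2$ lies on a circle of (Euclidean) diameter at least $1$. (When $Q$ is a dyadic segment, $\widehat{\langle Q\rangle}$ is itself such an arc.)
   Context: $\Sigma(x,y,z)=(x/(1-z),y/(1-z))$ is stereographic projection from $(0,0,1)$ onto $\mathbb{R}^2$. Dyadic segments: segments of the $x$-axis of $\mathbb{R}^2$ obtained from $[0,4]\times\{0\}$ by repeated bisection (including itself). Dyadic squares: obtained from $[-2,2]^2$ by repeatedly cutting into four congruent quarters; a dyadic square is good if it is contained in $[-3/2,3/2]^2$ and has side length at most $1/2$. $\langle Q\rangle$ denotes the solid segment or square. *)

theory Defs
  imports "HOL-Analysis.Analysis"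
begin

definition north_pole :: "real^3" where
  "north_pole = vector [0, 0, 1]"

definition Sigma :: "real^3 \<Rightarrow> real \<times> real" where
  "Sigma p = (p$1 / (1 - p$3), p$2 / (1 - p$3))"

definition Sigma_preimage :: "(real \<times> real) set \<Rightarrow> (real^3) set" where
  "Sigma_preimage A = {p \<in> sphere 0 1. p \<noteq> north_pole \<and> Sigma p \<in> A}"

definition sq :: "real \<Rightarrow> real \<Rightarrow> real \<Rightarrow> (real \<times> real) set" where
  "sq a b s = {a..a+s} \<times> {b..b+s}"

definition sq_sides :: "real \<Rightarrow> real \<Rightarrow> real \<Rightarrow> (real \<times> real) set set" where
  "sq_sides a b s = {{a..a+s} \<times> {b}, {a..a+s} \<times> {b+s}, {a} \<times> {b..b+s}, {a+s} \<times> {b..b+s}}"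

definition sides :: "(real \<times> real) set \<Rightarrow> (real \<times> real) set set" where
  "sides Q = {E. \<exists>a b s. s > 0 \<and> Q = sq a b s \<and> E \<in> sq_sides a b s}"

text \<open>Dyadic squares: obtained from [-2,2]^2 by k-fold quartering.\<close>
definition dyadic_square :: "(real \<times> real) set \<Rightarrow> bool" where
  "dyadic_square Q \<longleftrightarrow> (\<exists>k i j :: nat. i < 2^k \<and> j < 2^k \<and>
      Q = sq (-2 + real i * 4 / 2^k) (-2 + real j * 4 / 2^k) (4 / 2^k))"

definition good_dyadic_square :: "(real \<times> real) set \<Rightarrow> bool" where
  "good_dyadic_square Q \<longleftrightarrow>
      Q \<subseteq> {-3/2..3/2} \<times> {-3/2..3/2} \<and>
      (\<exists>k i j :: nat. i < 2^k \<and> j < 2^k \<and> (4::real) / 2^k \<le> 1/2 \<and>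
         Q = sq (-2 + real i * 4 / 2^k) (-2 + real j * 4 / 2^k) (4 / 2^k))"

text \<open>Dyadic segments: obtained from [0,4] x {0} by k-fold bisection.\<close>
definition dyadic_segment :: "(real \<times> real) set \<Rightarrow> bool" where
  "dyadic_segment Q \<longleftrightarrow> (\<exists>k i :: nat. i < 2^k \<and>
      Q = {real i * 4 / 2^k .. real (i+1) * 4 / 2^k} \<times> {0})"

definition on_circle_diam_ge :: "(real^3) set \<Rightarrow> real \<Rightarrow> bool" where
  "on_circle_diam_ge A d \<longleftrightarrow> (\<exists>c r n. n \<noteq> 0 \<and> r > 0 \<and> 2 * r \<ge> d \<and>
      A \<subseteq> {p. dist p c = r \<and> inner (p - c) n = 0})"

end

theory Submission imports Defs begin

text \<open>The stereographic preimage of the line \<open>x = a\<close> is the intersection of the unit sphere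
  with the plane \<open>x + a z = a\<close>, whose distance from the origin is \<open>\<bar>a\<bar> / sqrt (1 + a\<^sup>2)\<close>; the
  resulting circle has radius \<open>1 / sqrt (1 + a\<^sup>2)\<close>, which is at least \<open>1/2\<close> exactly when
  \<open>a\<^sup>2 \<le> 3\<close>. Every side of a good dyadic square, and every dyadic segment, lies on such a line
  (or its analogue \<open>y = b\<close>) with \<open>\<bar>a\<bar> \<le> 3/2\<close>.\<close>

lemma unit_sphere_inter_hyperplane:
  fixes p n :: "'a::real_inner"
  assumes "norm p = 1" "inner p n = d" "n \<noteq> 0"
  defines "c \<equiv> (d / (norm n)\<^sup>2) *\<^sub>R n"
  shows "inner (p - c) n = 0" and "(dist p c)\<^sup>2 = 1 - d\<^sup>2 / (norm n)\<^sup>2"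
proof -
  have nn: "inner n n = (norm n)\<^sup>2" "(norm n)\<^sup>2 \<noteq> 0"
    using assms(3) by (simp_all add: power2_norm_eq_inner)
  have pp: "inner p p = 1" using assms(1) by (simp add: power2_norm_eq_inner[symmetric])
  show "inner (p - c) n = 0"
    using assms(2) nn by (simp add: c_def inner_diff_left)
  have "(dist p c)\<^sup>2 = inner (p - c) (p - c)"
    by (simp add: dist_norm power2_norm_eq_inner)
  also have "\<dots> = inner p p - 2 * (d / (norm n)\<^sup>2) * inner p n
      + (d / (norm n)\<^sup>2)\<^sup>2 * inner n n"
    by (simp add: c_def inner_diff_left inner_diff_right inner_commute algebra_simps
        power2_eq_square)
  also have "\<dots> = 1 - d\<^sup>2 / (norm n)\<^sup>2"
    using pp assms(2) nn by (simp add: field_simps power2_eq_square)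
  finally show "(dist p c)\<^sup>2 = 1 - d\<^sup>2 / (norm n)\<^sup>2" .
qed

lemma on_circle_diam_ge_unit_sphere_hyperplane:
  fixes n :: "real^3"
  assumes A: "A \<subseteq> {p. norm p = 1 \<and> inner p n = d}" and "n \<noteq> 0"
    and small: "4 * d\<^sup>2 \<le> 3 * (norm n)\<^sup>2"
  shows "on_circle_diam_ge A 1"
proof -
  define c where "c = (d / (norm n)\<^sup>2) *\<^sub>R n"
  define r where "r = sqrt (1 - d\<^sup>2 / (norm n)\<^sup>2)"
  have "d\<^sup>2 / (norm n)\<^sup>2 \<le> 3 / 4"
    using small \<open>n \<noteq> 0\<close> by (simp add: field_simps)
  then have "r \<ge> sqrt (1 / 4)" unfolding r_def by (intro real_sqrt_le_mono) simp
  then have r: "r > 0" "2 * r \<ge> 1" by (simp_all add: real_sqrt_divide)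
  have "A \<subseteq> {p. dist p c = r \<and> inner (p - c) n = 0}"
  proof
    fix p assume "p \<in> A"
    then have "norm p = 1" "inner p n = d" using A by auto
    note circle = unit_sphere_inter_hyperplane[OF this \<open>n \<noteq> 0\<close>, folded c_def]
    have "dist p c = sqrt ((dist p c)\<^sup>2)" by simp
    with circle(2) have "dist p c = r" by (simp add: r_def)
    with circle(1) show "p \<in> {p. dist p c = r \<and> inner (p - c) n = 0}" by simp
  qed
  with r \<open>n \<noteq> 0\<close> show ?thesis unfolding on_circle_diam_ge_def by blast
qed

lemma Sigma_denominator_nonzero:
  assumes "p \<in> sphere (0::real^3) 1" "p \<noteq> north_pole"
  shows "1 - p$3 \<noteq> 0"
proof
  assume h: "1 - p$3 = 0"
  have "(p$1)\<^sup>2 + (p$2)\<^sup>2 + (p$3)\<^sup>2 = 1"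
  proof -
    have "inner p p = 1" using assms(1) by (simp add: power2_norm_eq_inner[symmetric])
    then show ?thesis by (simp add: inner_vec_def sum_3 power2_eq_square)
  qed
  with h have "p$1 = 0" "p$2 = 0" by (simp_all add: sum_power2_eq_zero_iff)
  with h have "p = north_pole" by (simp add: vec_eq_iff forall_3 north_pole_def)
  with assms(2) show False ..
qed

lemma Sigma_preimage_vertical_line:
  "Sigma_preimage ({a} \<times> UNIV) \<subseteq> {p. norm p = 1 \<and> inner p (vector [1, 0, a]) = a}"
proof
  fix p assume "p \<in> Sigma_preimage ({a} \<times> UNIV)"
  then have p: "p \<in> sphere 0 1" "p \<noteq> north_pole" "p$1 / (1 - p$3) = a"
    by (auto simp: Sigma_preimage_def Sigma_def)
  then have "p$1 = a * (1 - p$3)" using Sigma_denominator_nonzero by (simp add: field_simps)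
  with p(1) show "p \<in> {p. norm p = 1 \<and> inner p (vector [1, 0, a]) = a}"
    by (simp add: inner_vec_def sum_3 algebra_simps)
qed

lemma Sigma_preimage_horizontal_line:
  "Sigma_preimage (UNIV \<times> {b}) \<subseteq> {p. norm p = 1 \<and> inner p (vector [0, 1, b]) = b}"
proof
  fix p assume "p \<in> Sigma_preimage (UNIV \<times> {b})"
  then have p: "p \<in> sphere 0 1" "p \<noteq> north_pole" "p$2 / (1 - p$3) = b"
    by (auto simp: Sigma_preimage_def Sigma_def)
  then have "p$2 = b * (1 - p$3)" using Sigma_denominator_nonzero by (simp add: field_simps)
  with p(1) show "p \<in> {p. norm p = 1 \<and> inner p (vector [0, 1, b]) = b}"
    by (simp add: inner_vec_def sum_3 algebra_simps)
qed

lemma on_circle_diam_ge_Sigma_preimage_line: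
  assumes E: "E \<subseteq> {a} \<times> UNIV \<or> E \<subseteq> UNIV \<times> {a}" and a: "\<bar>a\<bar> \<le> 3/2"
  shows "on_circle_diam_ge (Sigma_preimage E) 1"
proof -
  have mono: "Sigma_preimage E \<subseteq> Sigma_preimage L" if "E \<subseteq> L" for L
    using that by (auto simp: Sigma_preimage_def)
  have "4 * a\<^sup>2 \<le> 9" using a abs_le_square_iff[of a "3/2"] by (simp add: power_divide)
  then have small: "4 * a\<^sup>2 \<le> 3 * (norm n)\<^sup>2" if "(norm n)\<^sup>2 = 1 + a\<^sup>2" for n :: "real^3"
    using that by simp
  have norms: "(norm (vector [1, 0, a] :: real^3))\<^sup>2 = 1 + a\<^sup>2"
    "(norm (vector [0, 1, a] :: real^3))\<^sup>2 = 1 + a\<^sup>2"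
    by (simp_all only: power2_norm_eq_inner) (simp_all add: inner_vec_def sum_3 power2_eq_square)
  have nonzero: "(vector [1, 0, a] :: real^3) \<noteq> 0" "(vector [0, 1, a] :: real^3) \<noteq> 0"
    by (simp_all add: vec_eq_iff forall_3)
  from E show ?thesis
  proof
    assume "E \<subseteq> {a} \<times> UNIV"
    with mono Sigma_preimage_vertical_line show ?thesis
      by (intro on_circle_diam_ge_unit_sphere_hyperplane[OF _ nonzero(1) small[OF norms(1)]])
        blast
  next
    assume "E \<subseteq> UNIV \<times> {a}"
    with mono Sigma_preimage_horizontal_line show ?thesis
      by (intro on_circle_diam_ge_unit_sphere_hyperplane[OF _ nonzero(2) small[OF norms(2)]])
        blast
  qed
qed

lemma side_on_coordinate_line:
  assumes "Q \<subseteq> S \<times> S" "E \<in> sides Q"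
  obtains a where "a \<in> S" "E \<subseteq> {a} \<times> UNIV \<or> E \<subseteq> UNIV \<times> {a}"
proof -
  from assms(2) obtain x y s where s: "s > 0" "Q = sq x y s" "E \<in> sq_sides x y s"
    by (auto simp: sides_def)
  then have "(x, y) \<in> Q" "(x + s, y + s) \<in> Q" by (auto simp: sq_def)
  then have "x \<in> S" "y \<in> S" "x + s \<in> S" "y + s \<in> S" using assms(1) by auto
  with s(3) that show ?thesis unfolding sq_sides_def by blast
qed

theorem lemma3p1:
  fixes Q E :: "(real \<times> real) set"
  assumes "(good_dyadic_square Q \<and> E \<in> sides Q) \<or> (dyadic_segment Q \<and> E = Q)"
  shows "on_circle_diam_ge (Sigma_preimage E) 1"
  using assms
proof
  assume "good_dyadic_square Q \<and> E \<in> sides Q"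
  then have "Q \<subseteq> {-3/2..3/2} \<times> {-3/2..3/2}" "E \<in> sides Q"
    by (simp_all add: good_dyadic_square_def)
  then obtain a where "a \<in> {-3/2..3/2}" "E \<subseteq> {a} \<times> UNIV \<or> E \<subseteq> UNIV \<times> {a}"
    by (rule side_on_coordinate_line)
  then show ?thesis by (intro on_circle_diam_ge_Sigma_preimage_line) auto
next
  assume "dyadic_segment Q \<and> E = Q"
  then have "E \<subseteq> UNIV \<times> {0}" by (auto simp: dyadic_segment_def)
  then show ?thesis by (intro on_circle_diam_ge_Sigma_preimage_line) auto
qed

end
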